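(* Let $B>0$ be arbitrary, let $c>0$, and let $\epsilon^*(B)=\dfrac{c\,e^{-c/2}}{1+B}$. Let $\beta$ be Lipschitz on $[0,1]$ with $\|\beta\|_\infty\le B$, write $\bar\beta=\|\beta\|_\infty$, let $k=\mathcal{K}(\beta)$ be the exact backstepping kernel, and let $\hat k$ (a neural operator approximation $\hat{\mathcal K}(\beta)$) satisfy $|k(x)-\hat k(x)|<\epsilon$ for all $x\in[0,1]$ with $\epsilon\in(0,\epsilon^* )$. Then solutions of the closed-loop system $$u_t(x,t)=u_x(x,t)+\beta(x)u(0,t),\quad x\in[0,1],\qquad u(1,t)=\int_0^1\hat k(1-y)u(y,t)\,dy$$ satisfy $$\|u(t)\|\le M e^{-c^*t/2}\|u(0)\|\quad\forall t\ge0,$$ with $c^*=c-\frac{e^c}{c}\epsilon^2(1+B)^2>0$ and $$M=\Big(1+\big(\bar\beta+(1+\bar\beta)\epsilon\big)e^{(1+\bar\beta)\epsilon}\Big)\big(1+\bar\beta e^{\bar\beta}\big)e^{c/2}.$$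
   Context: The backstepping kernel operator $\mathcal{K}$ maps $\beta\in C^0[0,1]$ to the solution $k$ of $k(x)=-\beta(x)+\int_0^x\beta(x-y)k(y)\,dy$, $x\in[0,1]$. $\|\cdot\|_\infty$ is the supremum norm on $[0,1]$ and $\|u(t)\|$ is the $L^2[0,1]$ norm of $u(\cdot,t)$. *)

theory Defs
  imports "HOL-Analysis.Analysis"
begin

definition sup_norm01 :: "(real \<Rightarrow> real) \<Rightarrow> real" where
  "sup_norm01 f = (SUP x\<in>{0..1}. \<bar>f x\<bar>)"

definition L2_norm01 :: "(real \<Rightarrow> real) \<Rightarrow> real" where
  "L2_norm01 f = sqrt (integral {0..1} (\<lambda>x. (f x)\<^sup>2))"

text \<open>The backstepping kernel equation: k = K(beta) iff k is a continuous solution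
  of k(x) = -beta(x) + int_0^x beta(x-y) k(y) dy on [0,1] (the solution is unique).\<close>
definition is_bs_kernel :: "(real \<Rightarrow> real) \<Rightarrow> (real \<Rightarrow> real) \<Rightarrow> bool" where
  "is_bs_kernel \<beta> k \<longleftrightarrow> continuous_on {0..1} k \<and>
     (\<forall>x\<in>{0..1}. k x = - \<beta> x + integral {0..x} (\<lambda>y. \<beta> (x - y) * k y))"

definition closed_loop_solution ::
  "(real \<Rightarrow> real) \<Rightarrow> (real \<Rightarrow> real) \<Rightarrow> (real \<Rightarrow> real \<Rightarrow> real) \<Rightarrow> bool" where
  "closed_loop_solution \<beta> khat u \<longleftrightarrow>
     (\<exists>ux ut :: real \<Rightarrow> real \<Rightarrow> real.
        continuous_on ({0..1} \<times> {0..}) (\<lambda>p. ux (fst p) (snd p)) \<and>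
        continuous_on ({0..1} \<times> {0..}) (\<lambda>p. ut (fst p) (snd p)) \<and>
        (\<forall>x\<in>{0..1}. \<forall>t\<in>{0..}.
           ((\<lambda>p. u (fst p) (snd p)) has_derivative (\<lambda>h. ux x t * fst h + ut x t * snd h))
             (at (x, t) within ({0..1} \<times> {0..}))) \<and>
        (\<forall>x\<in>{0..1}. \<forall>t\<in>{0..}. ut x t = ux x t + \<beta> x * u 0 t) \<and>
        (\<forall>t\<in>{0..}. u 1 t = integral {0..1} (\<lambda>y. khat (1 - y) * u y t)))"

end

theory Submission
  imports Defs
begin

text \<open>
  The backstepping transform \<open>w = u - k * u\<close> (Volterra convolution on \<open>[0,1]\<close>) maps the
  closed loop to the transport equation \<open>w\<^sub>t = w\<^sub>x\<close>, whose boundary value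
  \<open>w(1,t) = \<integral> (khat - k)(1 - y) u(y,t) dy\<close> is of order \<open>\<epsilon>\<close>. The kernel equation says
  \<open>k + \<beta> = \<beta> * k\<close>, so \<open>I - \<beta>*\<close> inverts \<open>I - k*\<close>; hence \<open>|w(1,t)| \<le> \<epsilon> (1 + b) \<integral>|w|\<close>
  for \<open>b = \<parallel>\<beta>\<parallel>\<^sub>\<infinity>\<close>. By Cauchy-Schwarz the weighted energy \<open>V = \<integral> e\<^sup>c\<^sup>x w\<^sup>2\<close>, with
  \<open>V' = e\<^sup>c w(1)\<^sup>2 - w(0)\<^sup>2 - c V\<close>, decays at rate \<open>c - e\<^sup>c \<epsilon>\<^sup>2 (1 + b)\<^sup>2 / c\<close>.
  Returning from \<open>w\<close> to \<open>u\<close> and back costs the factors \<open>1 + b\<close> and \<open>1 + b e\<^sup>b\<close> (a Gronwall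
  bound on \<open>k\<close>), and the weight costs \<open>e\<^sup>c\<^sup>/\<^sup>2\<close>.
\<close>

lemma has_real_derivative_nonpos_imp_le:
  fixes f f' :: "real \<Rightarrow> real"
  assumes deriv: "\<And>x. x \<in> {a..b} \<Longrightarrow> (f has_real_derivative f' x) (at x within {a..b})"
    and nonpos: "\<And>x. x \<in> {a..b} \<Longrightarrow> f' x \<le> 0" and x: "x \<in> {a..b}"
  shows "f x \<le> f a"
proof -
  have "\<exists>\<xi>\<in>{a..x}. f x - f a = (\<lambda>h. f' \<xi> * h) (x - a)"
  proof (rule mvt_very_simple)
    show "a \<le> x" using x by simp
    fix y assume "a \<le> y" "y \<le> x"
    then have "(f has_real_derivative f' y) (at y within {a..b})" using x by (intro deriv) auto
    then have "(f has_real_derivative f' y) (at y within {a..x})"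
      by (rule DERIV_subset) (use x in auto)
    then show "(f has_derivative (\<lambda>h. f' y * h)) (at y within {a..x})"
      by (simp add: has_field_derivative_def)
  qed
  then obtain \<xi> where "\<xi> \<in> {a..x}" "f x - f a = f' \<xi> * (x - a)" by auto
  moreover have "f' \<xi> \<le> 0" using \<open>\<xi> \<in> {a..x}\<close> x by (intro nonpos) auto
  ultimately show ?thesis using x mult_nonpos_nonneg[of "f' \<xi>" "x - a"] by auto
qed

lemma square_le_mult_if_weighted_bound:
  fixes X A G :: real
  assumes "0 \<le> X" "0 \<le> A" "0 \<le> G" and weighted: "\<And>l. l > 0 \<Longrightarrow> 2 * X \<le> l * A + G / l"
  shows "X\<^sup>2 \<le> A * G"
proof (cases "X = 0")
  case False
  then have X: "X > 0" using assms(1) by simp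
  show ?thesis
  proof (cases "A = 0")
    case True
    have "(G + 1) / X > 0" using X assms(3) by simp
    from weighted[OF this] True have "2 * X \<le> G * X / (G + 1)" by simp
    also have "\<dots> < X" using X assms(3) by (simp add: field_simps)
    finally show ?thesis using X by simp
  next
    case False
    then have A: "A > 0" using assms(2) by simp
    from weighted[of "X / A"] X A have "2 * X \<le> X + G * A / X" by (simp add: field_simps)
    then show ?thesis using X A by (simp add: field_simps power2_eq_square)
  qed
qed (use assms in simp)

lemma integral_abs_mult_square_le:
  fixes f g :: "real \<Rightarrow> real"
  assumes f: "continuous_on {a..b} f" and g: "continuous_on {a..b} g"
  shows "(integral {a..b} (\<lambda>x. \<bar>f x * g x\<bar>))\<^sup>2
           \<le> integral {a..b} (\<lambda>x. (f x)\<^sup>2) * integral {a..b} (\<lambda>x. (g x)\<^sup>2)"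
proof (rule square_le_mult_if_weighted_bound)
  have i1: "(\<lambda>x. \<bar>f x * g x\<bar>) integrable_on {a..b}" and i2: "(\<lambda>x. (f x)\<^sup>2) integrable_on {a..b}"
    and i3: "(\<lambda>x. (g x)\<^sup>2) integrable_on {a..b}"
    by (auto intro!: integrable_continuous_interval continuous_intros f g)
  show "0 \<le> integral {a..b} (\<lambda>x. \<bar>f x * g x\<bar>)" by (rule integral_nonneg[OF i1]) auto
  show "0 \<le> integral {a..b} (\<lambda>x. (f x)\<^sup>2)" by (rule integral_nonneg[OF i2]) auto
  show "0 \<le> integral {a..b} (\<lambda>x. (g x)\<^sup>2)" by (rule integral_nonneg[OF i3]) auto
  fix l :: real assume l: "l > 0"
  have "((\<lambda>x. 2 * \<bar>f x * g x\<bar>) has_integral 2 * integral {a..b} (\<lambda>x. \<bar>f x * g x\<bar>)) {a..b}"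
    by (intro has_integral_mult_right integrable_integral i1)
  moreover have "((\<lambda>x. l * (f x)\<^sup>2 + (g x)\<^sup>2 / l) has_integral
      l * integral {a..b} (\<lambda>x. (f x)\<^sup>2) + integral {a..b} (\<lambda>x. (g x)\<^sup>2) / l) {a..b}"
    by (intro has_integral_add has_integral_mult_right has_integral_divide integrable_integral i2 i3)
  moreover have "2 * \<bar>f x * g x\<bar> \<le> l * (f x)\<^sup>2 + (g x)\<^sup>2 / l" for x
  proof -
    have "0 \<le> (l * \<bar>f x\<bar> - \<bar>g x\<bar>)\<^sup>2 / l" using l by simp
    also have "\<dots> = l * (f x)\<^sup>2 + (g x)\<^sup>2 / l - 2 * \<bar>f x * g x\<bar>"
      using l by (simp add: field_simps power2_eq_square abs_mult)
    finally show ?thesis by simp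
  qed
  ultimately show "2 * integral {a..b} (\<lambda>x. \<bar>f x * g x\<bar>)
      \<le> l * integral {a..b} (\<lambda>x. (f x)\<^sup>2) + integral {a..b} (\<lambda>x. (g x)\<^sup>2) / l"
    by (rule has_integral_le)
qed

lemma integral_square_add_le:
  fixes f g :: "real \<Rightarrow> real"
  assumes f: "continuous_on {0..1} f" and g: "continuous_on {0..1} g" and K: "K \<ge> 0"
    and g_le: "\<And>x. x \<in> {0..1} \<Longrightarrow> \<bar>g x\<bar> \<le> K * integral {0..1} (\<lambda>y. \<bar>f y\<bar>)"
  shows "integral {0..1} (\<lambda>x. (f x + g x)\<^sup>2) \<le> (1 + K)\<^sup>2 * integral {0..1} (\<lambda>x. (f x)\<^sup>2)"
proof (cases "K = 0")
  case True
  then have "integral {0..1} (\<lambda>x. (f x + g x)\<^sup>2) = integral {0..1} (\<lambda>x. (f x)\<^sup>2)"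
    using g_le by (intro integral_cong) fastforce
  then show ?thesis using True by simp
next
  case False
  then have K: "K > 0" using K by simp
  define A where "A = integral {0..1} (\<lambda>x. (f x)\<^sup>2)"
  define I where "I = integral {0..1} (\<lambda>y. \<bar>f y\<bar>)"
  have ig: "(\<lambda>x. (g x)\<^sup>2) integrable_on {0..1}"
    by (auto intro!: integrable_continuous_interval continuous_intros g)
  have "I\<^sup>2 \<le> A"
    using integral_abs_mult_square_le[OF f continuous_on_const[of _ 1]] by (simp add: I_def A_def)
  have G: "integral {0..1} (\<lambda>x. (g x)\<^sup>2) \<le> K\<^sup>2 * A"
  proof -
    have "integral {0..1} (\<lambda>x. (g x)\<^sup>2) \<le> integral {0..1} (\<lambda>x::real. (K * I)\<^sup>2)"
    proof (rule integral_le[OF ig])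
      fix x :: real assume "x \<in> {0..1}"
      then have "\<bar>g x\<bar> \<le> K * I" using g_le by (simp add: I_def)
      then show "(g x)\<^sup>2 \<le> (K * I)\<^sup>2" by (metis abs_ge_zero order_trans power2_abs power_mono)
    qed (rule integrable_const_ivl)
    also have "\<dots> \<le> K\<^sup>2 * A" using \<open>I\<^sup>2 \<le> A\<close> by (simp add: power_mult_distrib mult_left_mono)
    finally show ?thesis .
  qed
  \<comment> \<open>Young's inequality with weight \<open>K\<close>: \<open>(a + b)\<^sup>2 \<le> (1 + K) a\<^sup>2 + (1 + 1/K) b\<^sup>2\<close>.\<close>
  have "integral {0..1} (\<lambda>x. (f x + g x)\<^sup>2) \<le> integral {0..1} (\<lambda>x. (1 + K) * (f x)\<^sup>2 + (1 + 1 / K) * (g x)\<^sup>2)"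
  proof (rule integral_le)
    fix x
    have "0 \<le> (K * f x - g x)\<^sup>2 / K" using K by simp
    also have "\<dots> = (1 + K) * (f x)\<^sup>2 + (1 + 1 / K) * (g x)\<^sup>2 - (f x + g x)\<^sup>2"
      using K by (simp add: field_simps power2_eq_square)
    finally show "(f x + g x)\<^sup>2 \<le> (1 + K) * (f x)\<^sup>2 + (1 + 1 / K) * (g x)\<^sup>2" by simp
  qed (auto intro!: integrable_continuous_interval continuous_intros f g)
  also have "\<dots> = (1 + K) * A + (1 + 1 / K) * integral {0..1} (\<lambda>x. (g x)\<^sup>2)"
    unfolding A_def
    by (subst integral_add) (auto intro!: integrable_continuous_interval continuous_intros f g)
  also have "\<dots> \<le> (1 + K) * A + (1 + 1 / K) * (K\<^sup>2 * A)"
    using G K by (intro add_left_mono mult_left_mono) auto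
  also have "\<dots> = (1 + K)\<^sup>2 * A" using K by (simp add: field_simps power2_eq_square)
  finally show ?thesis by (simp add: A_def)
qed

lemma L2_norm01_le_if_integral_square_le:
  assumes "integral {0..1} (\<lambda>x. (f x)\<^sup>2) \<le> C\<^sup>2 * integral {0..1} (\<lambda>x. (g x)\<^sup>2)" "C \<ge> 0"
  shows "L2_norm01 f \<le> C * L2_norm01 g"
proof -
  have "L2_norm01 f \<le> sqrt (C\<^sup>2 * integral {0..1} (\<lambda>x. (g x)\<^sup>2))"
    unfolding L2_norm01_def using assms(1) by (rule real_sqrt_le_mono)
  also have "\<dots> = C * L2_norm01 g" using assms(2) by (simp add: L2_norm01_def real_sqrt_mult)
  finally show ?thesis .
qed

lemma integral_eq_lborel_integral:
  fixes h :: "real \<Rightarrow> real"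
  assumes "integrable lborel h" "\<And>x. x \<notin> S \<Longrightarrow> h x = 0"
  shows "integral S h = integral\<^sup>L lborel h"
proof -
  have "integral S h = integral UNIV (\<lambda>x. if x \<in> S then h x else 0)"
    by (simp add: integral_restrict_UNIV)
  also have "(\<lambda>x. if x \<in> S then h x else 0) = h" using assms(2) by auto
  also have "integral UNIV h = integral\<^sup>L lborel h" using assms(1) by (rule integral_lborel)
  finally show ?thesis .
qed

lemma integral_swap_triangle:
  fixes f :: "real \<Rightarrow> real \<Rightarrow> real"
  assumes cont: "continuous_on {p. 0 \<le> snd p \<and> snd p \<le> fst p \<and> fst p \<le> a} (\<lambda>p. f (fst p) (snd p))"
  shows "integral {0..a} (\<lambda>x. integral {0..x} (\<lambda>y. f x y))
           = integral {0..a} (\<lambda>y. integral {y..a} (\<lambda>x. f x y))"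
proof -
  define T where "T = {p::real\<times>real. 0 \<le> snd p \<and> snd p \<le> fst p \<and> fst p \<le> a}"
  define g where "g = (\<lambda>x y. indicator T (x,y) * f x y)"
  have "compact T"
  proof -
    have "T \<subseteq> cbox (0,0) (a,a)" unfolding T_def by (auto simp: cbox_def Basis_prod_def inner_prod_def)
    moreover have "closed T" unfolding T_def
      by (intro closed_Collect_conj closed_Collect_le continuous_intros)
    ultimately show ?thesis using compact_cbox bounded_subset compact_eq_bounded_closed by blast
  qed
  then have "integrable lborel (\<lambda>p. indicator T p *\<^sub>R f (fst p) (snd p))"
    by (rule borel_integrable_compact) (use cont in \<open>simp add: T_def\<close>)
  then have int: "integrable (lborel \<Otimes>\<^sub>M lborel) (case_prod g)"
    by (simp add: lborel_prod g_def split_beta' case_prod_beta)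
  have section_eq: "integral {l..r} h = (\<integral>z. indicator {l..r} z * h z \<partial>lborel)"
    if "continuous_on {l..r} h" for l r :: real and h :: "real \<Rightarrow> real"
    using set_borel_integral_eq_integral(2)[OF borel_integrable_atLeastAtMost'[OF that]]
    by (simp add: set_lebesgue_integral_def)
  have inner_x: "integral {0..x} (\<lambda>y. f x y) = (\<integral>y. g x y \<partial>lborel)" if x: "x \<in> {0..a}" for x
  proof -
    have "continuous_on {0..x} (\<lambda>y. (\<lambda>p. f (fst p) (snd p)) (x, y))"
      by (rule continuous_on_compose2[OF cont]) (use x in \<open>auto intro!: continuous_intros\<close>)
    then have "integral {0..x} (\<lambda>y. f x y) = (\<integral>y. indicator {0..x} y * f x y \<partial>lborel)"
      by (intro section_eq) simp
    also have "\<dots> = (\<integral>y. g x y \<partial>lborel)"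
      by (intro Bochner_Integration.integral_cong) (use x in \<open>auto simp: g_def T_def split: split_indicator\<close>)
    finally show ?thesis .
  qed
  have inner_y: "integral {y..a} (\<lambda>x. f x y) = (\<integral>x. g x y \<partial>lborel)" if y: "y \<in> {0..a}" for y
  proof -
    have "continuous_on {y..a} (\<lambda>x. (\<lambda>p. f (fst p) (snd p)) (x, y))"
      by (rule continuous_on_compose2[OF cont]) (use y in \<open>auto intro!: continuous_intros\<close>)
    then have "integral {y..a} (\<lambda>x. f x y) = (\<integral>x. indicator {y..a} x * f x y \<partial>lborel)"
      by (intro section_eq) simp
    also have "\<dots> = (\<integral>x. g x y \<partial>lborel)"
      by (intro Bochner_Integration.integral_cong) (use y in \<open>auto simp: g_def T_def split: split_indicator\<close>)
    finally show ?thesis .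
  qed
  have "integral {0..a} (\<lambda>x. integral {0..x} (\<lambda>y. f x y)) = integral {0..a} (\<lambda>x. \<integral>y. g x y \<partial>lborel)"
    using inner_x by (rule integral_cong)
  also have "\<dots> = (\<integral>x. (\<integral>y. g x y \<partial>lborel) \<partial>lborel)"
  proof (rule integral_eq_lborel_integral[OF lborel_pair.integrable_fst'[OF int, simplified]])
    fix x assume "x \<notin> {0..a}"
    then have "(\<lambda>y. g x y) = (\<lambda>y. 0)" by (auto simp: g_def T_def indicator_def)
    then show "(\<integral>y. g x y \<partial>lborel) = 0" by simp
  qed
  also have "\<dots> = (\<integral>y. (\<integral>x. g x y \<partial>lborel) \<partial>lborel)"
    by (rule lborel_pair.Fubini_integral[OF int, symmetric])
  also have "\<dots> = integral {0..a} (\<lambda>y. \<integral>x. g x y \<partial>lborel)"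
  proof (rule integral_eq_lborel_integral[OF lborel_pair.integrable_snd[OF int, simplified], symmetric])
    fix y assume "y \<notin> {0..a}"
    then have "(\<lambda>x. g x y) = (\<lambda>x. 0)" by (auto simp: g_def T_def indicator_def)
    then show "(\<integral>x. g x y \<partial>lborel) = 0" by simp
  qed
  also have "\<dots> = integral {0..a} (\<lambda>y. integral {y..a} (\<lambda>x. f x y))"
    using inner_y by (intro integral_cong) auto
  finally show ?thesis .
qed

lemma integral_flip_ivl:
  fixes h :: "real \<Rightarrow> real"
  shows "integral {a..b} (\<lambda>y. h (a + b - y)) = integral {a..b} h"
proof -
  have "integral {a..b} h = integral {-b..-a} (\<lambda>x. h (x + (a + b)))"
    using integral_shift_real_ivl[of a "a + b" b h] by simp
  also have "\<dots> = integral {a..b} (\<lambda>y. h (a + b - y))"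
    using Henstock_Kurzweil_Integration.integral_reflect_real[of b a "\<lambda>y. h (a + b - y)"]
    by (simp add: add.commute)
  finally show ?thesis ..
qed

lemma sqrt_exp: "sqrt (exp x) = exp (x / 2)"
  by (rule real_sqrt_unique) (simp_all add: power2_eq_square flip: exp_add)

lemma L2_norm01_nonneg: "0 \<le> L2_norm01 f"
proof (cases "(\<lambda>x. (f x)\<^sup>2) integrable_on {0..1}")
  case True
  then show ?thesis unfolding L2_norm01_def by (intro real_sqrt_ge_zero integral_nonneg) auto
qed (simp add: L2_norm01_def not_integrable_integral)

lemma L2_norm01_cong: "(\<And>x. x \<in> {0..1} \<Longrightarrow> f x = g x) \<Longrightarrow> L2_norm01 f = L2_norm01 g"
  unfolding L2_norm01_def by (intro arg_cong[where f=sqrt] integral_cong) simp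

lemma continuous_on_Times_slice:
  assumes "continuous_on (S \<times> T) (\<lambda>p. F (fst p) (snd p))" "t \<in> T"
  shows "continuous_on S (\<lambda>x. F x t)"
proof -
  have "continuous_on S (\<lambda>x. (\<lambda>p. F (fst p) (snd p)) (x, t))"
    by (rule continuous_on_compose2[OF assms(1)]) (use assms(2) in \<open>auto intro!: continuous_intros\<close>)
  then show ?thesis by simp
qed

lemma integral_rescale_unit:
  fixes h :: "real \<Rightarrow> real"
  assumes "x \<ge> 0"
  shows "integral {0..x} h = x * integral {0..1} (\<lambda>s. h (x * s))"
proof (cases "x = 0")
  case False
  then have "(\<lambda>s. s / x) ` {0..x} = {0..1}"
    using assms by simp
  then show ?thesis
    using integral_stretch_real[of x 0 x h] False assms by simp
qed simp

section \<open>Volterra convolution on the unit interval\<close>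

definition conv :: "(real \<Rightarrow> real) \<Rightarrow> (real \<Rightarrow> real) \<Rightarrow> real \<Rightarrow> real" where
  "conv f g x = integral {0..x} (\<lambda>y. f (x - y) * g y)"

lemma conv_integrable:
  fixes f g :: "real \<Rightarrow> real"
  assumes f: "continuous_on {0..1} f" and g: "continuous_on {0..1} g" and x: "x \<in> {0..1}"
  shows "(\<lambda>y. f (x - y) * g y) integrable_on {0..x}"
proof (intro integrable_continuous_interval continuous_on_mult)
  show "continuous_on {0..x} (\<lambda>y. f (x - y))"
    by (rule continuous_on_compose2[OF f]) (use x in \<open>auto intro!: continuous_intros\<close>)
  show "continuous_on {0..x} g" using g x by (auto intro: continuous_on_subset)
qed

lemma conv_commute: "conv f g x = conv g f x"
proof -
  have "conv f g x = integral {0..x} (\<lambda>y. (\<lambda>y. f (x - y) * g y) (0 + x - y))"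
    unfolding conv_def by (rule integral_flip_ivl[symmetric])
  also have "\<dots> = conv g f x" unfolding conv_def by (simp add: mult.commute)
  finally show ?thesis .
qed

lemma conv_cong:
  assumes "\<And>y. y \<in> {0..x} \<Longrightarrow> f y = f' y" "\<And>y. y \<in> {0..x} \<Longrightarrow> g y = g' y"
  shows "conv f g x = conv f' g' x"
  unfolding conv_def by (rule integral_cong) (use assms in auto)

lemma conv_one_left: "conv (\<lambda>_. 1) g x = integral {0..x} g"
  unfolding conv_def by simp

lemma conv_const_right: "conv f (\<lambda>_. a) x = a * integral {0..x} f"
  by (subst conv_commute) (simp add: conv_def)

lemma conv_cmult_right: "conv f (\<lambda>y. c * g y) x = c * conv f g x"
  unfolding conv_def by (simp add: mult.left_commute[of _ c])

lemma conv_add_right: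
  fixes f g h :: "real \<Rightarrow> real"
  assumes "continuous_on {0..1} f" "continuous_on {0..1} g" "continuous_on {0..1} h" "x \<in> {0..1}"
  shows "conv f (\<lambda>y. g y + h y) x = conv f g x + conv f h x"
  unfolding conv_def using conv_integrable[OF assms(1,2,4)] conv_integrable[OF assms(1,3,4)]
  by (simp add: distrib_left integral_add)

lemma conv_diff_right:
  fixes f g h :: "real \<Rightarrow> real"
  assumes "continuous_on {0..1} f" "continuous_on {0..1} g" "continuous_on {0..1} h" "x \<in> {0..1}"
  shows "conv f (\<lambda>y. g y - h y) x = conv f g x - conv f h x"
  unfolding conv_def using conv_integrable[OF assms(1,2,4)] conv_integrable[OF assms(1,3,4)]
  by (simp add: right_diff_distrib integral_diff)

lemma conv_add_left:
  fixes f g h :: "real \<Rightarrow> real"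
  assumes "continuous_on {0..1} f" "continuous_on {0..1} g" "continuous_on {0..1} h" "x \<in> {0..1}"
  shows "conv (\<lambda>y. f y + g y) h x = conv f h x + conv g h x"
  unfolding conv_def using conv_integrable[OF assms(1,3,4)] conv_integrable[OF assms(2,3,4)]
  by (simp add: distrib_right integral_add)

lemma conv_assoc:
  fixes f g h :: "real \<Rightarrow> real"
  assumes f: "continuous_on {0..1} f" and g: "continuous_on {0..1} g" and h: "continuous_on {0..1} h"
    and x: "x \<in> {0..1}"
  shows "conv (conv f g) h x = conv f (conv g h) x"
proof -
  define T where "T = {p::real\<times>real. 0 \<le> snd p \<and> snd p \<le> fst p \<and> fst p \<le> x}"
  have "continuous_on T (\<lambda>p. f (x - fst p) * (g (fst p - snd p) * h (snd p)))"
  proof (intro continuous_on_mult)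
    show "continuous_on T (\<lambda>p. f (x - fst p))"
      by (rule continuous_on_compose2[OF f]) (use x in \<open>auto simp: T_def intro!: continuous_intros\<close>)
    show "continuous_on T (\<lambda>p. g (fst p - snd p))"
      by (rule continuous_on_compose2[OF g]) (use x in \<open>auto simp: T_def intro!: continuous_intros\<close>)
    show "continuous_on T (\<lambda>p. h (snd p))"
      by (rule continuous_on_compose2[OF h]) (use x in \<open>auto simp: T_def intro!: continuous_intros\<close>)
  qed
  then have "conv f (conv g h) x
      = integral {0..x} (\<lambda>z. integral {z..x} (\<lambda>y. f (x - y) * (g (y - z) * h z)))"
    unfolding conv_def by (subst integral_swap_triangle[symmetric]) (simp_all add: T_def)
  also have "\<dots> = integral {0..x} (\<lambda>z. conv f g (x - z) * h z)"
  proof (rule integral_cong)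
    fix z
    have "integral {z..x} (\<lambda>y. f (x - y) * (g (y - z) * h z))
        = integral {z..x} (\<lambda>y. f (x - y) * g (y - z)) * h z"
      unfolding mult.assoc[symmetric] by (rule Henstock_Kurzweil_Integration.integral_mult_left)
    also have "integral {z..x} (\<lambda>y. f (x - y) * g (y - z))
        = integral {z-z..x-z} (\<lambda>r. f (x - (r + z)) * g ((r + z) - z))"
      by (rule integral_shift_real_ivl[symmetric])
    also have "\<dots> = conv f g (x - z)" unfolding conv_def by (simp add: algebra_simps)
    finally show "integral {z..x} (\<lambda>y. f (x - y) * (g (y - z) * h z)) = conv f g (x - z) * h z" .
  qed
  also have "\<dots> = conv (conv f g) h x" unfolding conv_def ..
  finally show ?thesis ..
qed

lemma abs_conv_le:
  fixes f g :: "real \<Rightarrow> real"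
  assumes f: "continuous_on {0..1} f" and g: "continuous_on {0..1} g" and x: "x \<in> {0..1}"
    and f_le: "\<And>y. y \<in> {0..1} \<Longrightarrow> \<bar>f y\<bar> \<le> b"
  shows "\<bar>conv f g x\<bar> \<le> b * integral {0..x} (\<lambda>y. \<bar>g y\<bar>)"
proof -
  have "norm (conv f g x) \<le> integral {0..x} (\<lambda>y. b * \<bar>g y\<bar>)"
    unfolding conv_def
  proof (rule integral_norm_bound_integral[OF conv_integrable[OF f g x]])
    show "(\<lambda>y. b * \<bar>g y\<bar>) integrable_on {0..x}"
      using g x by (intro integrable_continuous_interval continuous_intros) (auto intro: continuous_on_subset)
    fix y assume "y \<in> {0..x}"
    then have "\<bar>f (x - y)\<bar> \<le> b" using x by (intro f_le) auto
    then show "norm (f (x - y) * g y) \<le> b * \<bar>g y\<bar>" by (simp add: abs_mult mult_right_mono)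
  qed
  then show ?thesis by simp
qed

lemma integral_abs_le_unit:
  fixes g :: "real \<Rightarrow> real"
  assumes "continuous_on {0..1} g" "x \<in> {0..1}"
  shows "integral {0..x} (\<lambda>y. \<bar>g y\<bar>) \<le> integral {0..1} (\<lambda>y. \<bar>g y\<bar>)"
  using assms by (intro integral_subset_le)
    (auto intro!: integrable_continuous_interval continuous_intros intro: continuous_on_subset)

lemma continuous_on_conv_param:
  fixes g :: "real \<Rightarrow> 'a::topological_space \<Rightarrow> real"
  assumes f: "continuous_on {0..1} f" and g: "continuous_on ({0..1} \<times> P) (\<lambda>p. g (fst p) (snd p))"
  shows "continuous_on ({0..1} \<times> P) (\<lambda>p. conv f (\<lambda>y. g y (snd p)) (fst p))"
proof -
  \<comment> \<open>Substituting \<open>y = x s\<close> moves the parameter \<open>x\<close> out of the domain of integration.\<close>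
  have eq: "conv f (\<lambda>y. g y (snd p)) (fst p)
      = fst p * integral (cbox 0 1) (\<lambda>s. f (fst p - fst p * s) * g (fst p * s) (snd p))"
    if "p \<in> {0..1} \<times> P" for p
    using that integral_rescale_unit[of "fst p" "\<lambda>y. f (fst p - y) * g y (snd p)"]
    by (auto simp: conv_def mem_Times_iff)
  have "continuous_on ({0..1} \<times> P)
      (\<lambda>p. integral (cbox 0 1) (\<lambda>s. f (fst p - fst p * s) * g (fst p * s) (snd p)))"
  proof (rule integral_continuous_on_param)
    have "a - a * b \<in> {0..1}" if "a \<in> {0..1}" "b \<in> {0..1}" for a b :: real
    proof -
      have "0 \<le> a * b" "a * b \<le> a" using that by (auto simp: mult_left_le)
      then show ?thesis using that by auto
    qed
    then have s1: "(\<lambda>q. fst (fst q) - fst (fst q) * snd q) ` (({0..1::real} \<times> P) \<times> cbox 0 1) \<subseteq> {0..1}"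
      by (auto simp: mem_Times_iff)
    have s2: "(\<lambda>q. (fst (fst q) * snd q, snd (fst q))) ` (({0..1::real} \<times> P) \<times> cbox 0 1) \<subseteq> {0..1} \<times> P"
      by (auto simp: mult_le_one)
    have "continuous_on (({0..1} \<times> P) \<times> cbox 0 1) (\<lambda>q. f (fst (fst q) - fst (fst q) * snd q))"
      by (rule continuous_on_compose2[OF f _ s1]) (intro continuous_intros)
    moreover have "continuous_on (({0..1} \<times> P) \<times> cbox 0 1)
        (\<lambda>q. (\<lambda>p. g (fst p) (snd p)) (fst (fst q) * snd q, snd (fst q)))"
      by (rule continuous_on_compose2[OF g _ s2]) (intro continuous_intros)
    ultimately show "continuous_on (({0..1} \<times> P) \<times> cbox 0 1)
        (\<lambda>(p, s). f (fst p - fst p * s) * g (fst p * s) (snd p))"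
      by (simp add: case_prod_beta continuous_on_mult)
  qed
  then have "continuous_on ({0..1} \<times> P)
      (\<lambda>p. fst p * integral (cbox 0 1) (\<lambda>s. f (fst p - fst p * s) * g (fst p * s) (snd p)))"
    by (intro continuous_on_mult continuous_intros)
  then show ?thesis by (rule continuous_on_eq) (metis eq)
qed

lemma continuous_on_conv:
  assumes f: "continuous_on {0..1} f" and g: "continuous_on {0..1} g"
  shows "continuous_on {0..1} (conv f g)"
proof -
  have "continuous_on ({0..1} \<times> {0::real}) (\<lambda>p. conv f (\<lambda>y. (\<lambda>y t. g y) y (snd p)) (fst p))"
    by (rule continuous_on_conv_param[OF f])
      (rule continuous_on_compose2[OF g], auto intro!: continuous_intros)
  then have "continuous_on {0..1} (\<lambda>x. (\<lambda>p. conv f (\<lambda>y. g y) (fst p)) (x, 0::real))"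
    by (rule continuous_on_compose2) (auto intro!: continuous_intros)
  then show ?thesis by simp
qed

lemma integral_conv:
  fixes f g :: "real \<Rightarrow> real"
  assumes f: "continuous_on {0..1} f" and g: "continuous_on {0..1} g" and x: "x \<in> {0..1}"
  shows "integral {0..x} (conv f g) = conv f (\<lambda>y. integral {0..y} g) x"
proof -
  have one: "continuous_on {0..1} (\<lambda>_::real. 1::real)" by simp
  have "integral {0..x} (conv f g) = conv (conv (\<lambda>_. 1) f) g x"
    by (simp add: conv_one_left conv_assoc[OF one f g x])
  also have "\<dots> = conv (conv f (\<lambda>_. 1)) g x" by (rule conv_cong) (auto intro: conv_commute)
  also have "\<dots> = conv f (\<lambda>y. integral {0..y} g) x"
    unfolding conv_assoc[OF f one g x] by (rule conv_cong) (simp_all add: conv_one_left)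
  finally show ?thesis .
qed

lemma L2_norm01_sub_conv_le:
  fixes f g :: "real \<Rightarrow> real"
  assumes f: "continuous_on {0..1} f" and g: "continuous_on {0..1} g" and K: "K \<ge> 0"
    and f_le: "\<And>y. y \<in> {0..1} \<Longrightarrow> \<bar>f y\<bar> \<le> K"
  shows "L2_norm01 (\<lambda>x. g x - conv f g x) \<le> (1 + K) * L2_norm01 g"
proof (rule L2_norm01_le_if_integral_square_le)
  have "integral {0..1} (\<lambda>x. (g x + - conv f g x)\<^sup>2) \<le> (1 + K)\<^sup>2 * integral {0..1} (\<lambda>x. (g x)\<^sup>2)"
  proof (rule integral_square_add_le[OF g _ K])
    show "continuous_on {0..1} (\<lambda>x. - conv f g x)" by (intro continuous_intros continuous_on_conv f g)
    fix x :: real assume x: "x \<in> {0..1}"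
    have "\<bar>conv f g x\<bar> \<le> K * integral {0..x} (\<lambda>y. \<bar>g y\<bar>)" by (rule abs_conv_le[OF f g x f_le])
    also have "\<dots> \<le> K * integral {0..1} (\<lambda>y. \<bar>g y\<bar>)"
      using integral_abs_le_unit[OF g x] K by (rule mult_left_mono)
    finally show "\<bar>- conv f g x\<bar> \<le> K * integral {0..1} (\<lambda>y. \<bar>g y\<bar>)" by simp
  qed
  then show "integral {0..1} (\<lambda>x. (g x - conv f g x)\<^sup>2) \<le> (1 + K)\<^sup>2 * integral {0..1} (\<lambda>x. (g x)\<^sup>2)"
    by simp
qed (use K in simp)

section \<open>The backstepping kernel\<close>

lemma is_bs_kernel_conv:
  assumes "is_bs_kernel \<beta> k" "x \<in> {0..1}"
  shows "conv \<beta> k x = k x + \<beta> x"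
  using assms by (simp add: is_bs_kernel_def conv_def)

lemma is_bs_kernel_abs_le:
  assumes \<beta>: "continuous_on {0..1} \<beta>" and \<beta>_le: "\<And>x. x \<in> {0..1} \<Longrightarrow> \<bar>\<beta> x\<bar> \<le> b"
    and kernel: "is_bs_kernel \<beta> k" and x: "x \<in> {0..1}"
  shows "\<bar>k x\<bar> \<le> b * exp b"
proof -
  have b: "0 \<le> b" using \<beta>_le[of 0] by simp
  have k: "continuous_on {0..1} k" using kernel by (simp add: is_bs_kernel_def)
  define \<phi> where "\<phi> = (\<lambda>x. integral {0..x} (\<lambda>y. \<bar>k y\<bar>))"
  have k_le: "\<bar>k y\<bar> \<le> b * (1 + \<phi> y)" if y: "y \<in> {0..1}" for y
  proof -
    have "\<bar>conv \<beta> k y\<bar> \<le> b * \<phi> y" unfolding \<phi>_def by (rule abs_conv_le[OF \<beta> k y \<beta>_le])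
    then show ?thesis using is_bs_kernel_conv[OF kernel y] \<beta>_le[OF y] by (simp add: algebra_simps)
  qed
  \<comment> \<open>Gronwall: \<open>k_le\<close> makes \<open>exp (- b x) (1 + \<phi> x)\<close> nonincreasing.\<close>
  define \<psi> where "\<psi> = (\<lambda>x. exp (- b * x) * (1 + \<phi> x))"
  have "\<psi> x \<le> \<psi> 0"
  proof (rule has_real_derivative_nonpos_imp_le[OF _ _ x])
    fix y :: real assume y: "y \<in> {0..1}"
    have "(\<phi> has_real_derivative \<bar>k y\<bar>) (at y within {0..1})"
      unfolding \<phi>_def by (rule integral_has_real_derivative[OF _ y]) (intro continuous_intros k)
    then show "(\<psi> has_real_derivative (exp (- b * y) * (\<bar>k y\<bar> - b * (1 + \<phi> y)))) (at y within {0..1})"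
      unfolding \<psi>_def by (auto intro!: derivative_eq_intros simp: algebra_simps)
    show "exp (- b * y) * (\<bar>k y\<bar> - b * (1 + \<phi> y)) \<le> 0"
      using k_le[OF y] by (simp add: mult_nonneg_nonpos)
  qed
  then have "1 + \<phi> x \<le> exp (b * x)" by (simp add: \<psi>_def \<phi>_def exp_minus field_simps)
  also have "\<dots> \<le> exp b" using x b by (simp add: mult_left_le)
  finally show ?thesis using k_le[OF x] b by (meson mult_left_mono order_trans)
qed

lemma is_bs_kernel_inverse:
  fixes g :: "real \<Rightarrow> real"
  assumes \<beta>: "continuous_on {0..1} \<beta>" and kernel: "is_bs_kernel \<beta> k"
    and g: "continuous_on {0..1} g" and x: "x \<in> {0..1}"
  shows "g x = (g x - conv k g x) - conv \<beta> (\<lambda>y. g y - conv k g y) x"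
proof -
  have k: "continuous_on {0..1} k" using kernel by (simp add: is_bs_kernel_def)
  have "conv \<beta> (\<lambda>y. g y - conv k g y) x = conv \<beta> g x - conv (conv \<beta> k) g x"
    by (simp add: conv_diff_right[OF \<beta> g continuous_on_conv[OF k g] x] conv_assoc[OF \<beta> k g x])
  also have "conv (conv \<beta> k) g x = conv (\<lambda>y. k y + \<beta> y) g x"
    by (rule conv_cong) (use x is_bs_kernel_conv[OF kernel] in auto)
  also have "\<dots> = conv k g x + conv \<beta> g x" by (rule conv_add_left[OF k \<beta> g x])
  finally show ?thesis by simp
qed

lemma is_bs_kernel_conv_integral:
  assumes \<beta>: "continuous_on {0..1} \<beta>" and kernel: "is_bs_kernel \<beta> k" and x: "x \<in> {0..1}"
  shows "conv k (\<lambda>y. integral {0..y} \<beta> - 1) x = integral {0..x} \<beta>"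
proof -
  have k: "continuous_on {0..1} k" using kernel by (simp add: is_bs_kernel_def)
  have B: "continuous_on {0..1} (\<lambda>y. integral {0..y} \<beta>)"
    by (intro indefinite_integral_continuous_1 integrable_continuous_interval \<beta>)
  have "conv k (\<lambda>y. integral {0..y} \<beta> - 1) x = integral {0..x} (conv k \<beta>) - integral {0..x} k"
    by (simp add: conv_diff_right[OF k B _ x] integral_conv[OF k \<beta> x] conv_const_right)
  also have "\<dots> = integral {0..x} (\<lambda>z. conv k \<beta> z - k z)"
    using x by (intro integral_diff[symmetric] integrable_continuous_interval continuous_on_conv k \<beta>
        continuous_on_subset[of "{0..1}"]) auto
  also have "\<dots> = integral {0..x} \<beta>"
    using x by (intro integral_cong) (simp add: conv_commute[of k] is_bs_kernel_conv[OF kernel])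
  finally show ?thesis .
qed

section \<open>The closed loop\<close>

locale bs_closed_loop =
  fixes \<beta> k khat :: "real \<Rightarrow> real" and u ux ut :: "real \<Rightarrow> real \<Rightarrow> real" and bmax \<epsilon> c :: real
  assumes beta_cont: "continuous_on {0..1} \<beta>"
    and beta_le: "\<And>x. x \<in> {0..1} \<Longrightarrow> \<bar>\<beta> x\<bar> \<le> bmax"
    and kernel: "is_bs_kernel \<beta> k"
    and khat_cont: "continuous_on {0..1} khat"
    and kernel_error: "\<And>x. x \<in> {0..1} \<Longrightarrow> \<bar>k x - khat x\<bar> \<le> \<epsilon>"
    and c_pos: "c > 0"
    and ux_cont: "continuous_on ({0..1} \<times> {0..}) (\<lambda>p. ux (fst p) (snd p))"
    and ut_cont: "continuous_on ({0..1} \<times> {0..}) (\<lambda>p. ut (fst p) (snd p))"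
    and u_deriv: "\<And>x t. x \<in> {0..1} \<Longrightarrow> t \<in> {0..} \<Longrightarrow>
      ((\<lambda>p. u (fst p) (snd p)) has_derivative (\<lambda>h. ux x t * fst h + ut x t * snd h))
        (at (x, t) within {0..1} \<times> {0..})"
    and pde: "\<And>x t. x \<in> {0..1} \<Longrightarrow> t \<in> {0..} \<Longrightarrow> ut x t = ux x t + \<beta> x * u 0 t"
    and boundary: "\<And>t. t \<in> {0..} \<Longrightarrow> u 1 t = integral {0..1} (\<lambda>y. khat (1 - y) * u y t)"
begin

lemma bmax_nonneg: "0 \<le> bmax"
  using beta_le[of 0] by simp

lemma eps_nonneg: "0 \<le> \<epsilon>"
  using kernel_error[of 0] by simp

lemma k_cont: "continuous_on {0..1} k"
  using kernel by (simp add: is_bs_kernel_def)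

lemma u_cont: "continuous_on ({0..1} \<times> {0..}) (\<lambda>p. u (fst p) (snd p))"
proof -
  have "continuous (at p within {0..1} \<times> {0..}) (\<lambda>p. u (fst p) (snd p))" if "p \<in> {0..1} \<times> {0..}" for p
    using u_deriv[of "fst p" "snd p"] that by (intro has_derivative_continuous) (auto simp: mem_Times_iff)
  then show ?thesis by (simp add: continuous_on_eq_continuous_within)
qed

lemma u_slice_cont: "t \<ge> 0 \<Longrightarrow> continuous_on {0..1} (\<lambda>x. u x t)"
  by (rule continuous_on_Times_slice[OF u_cont]) simp

lemma ux_slice_cont: "t \<ge> 0 \<Longrightarrow> continuous_on {0..1} (\<lambda>x. ux x t)"
  by (rule continuous_on_Times_slice[OF ux_cont]) simp

lemma ut_slice_cont: "t \<ge> 0 \<Longrightarrow> continuous_on {0..1} (\<lambda>x. ut x t)"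
  by (rule continuous_on_Times_slice[OF ut_cont]) simp

lemma u_has_derivative_x:
  assumes x: "x \<in> {0..1}" and t: "t \<ge> 0"
  shows "((\<lambda>x. u x t) has_real_derivative ux x t) (at x within {0..1})"
proof -
  have "((\<lambda>y. (\<lambda>p. u (fst p) (snd p)) (y, t)) has_derivative
          (\<lambda>h. (\<lambda>q h. ux (fst q) (snd q) * fst h + ut (fst q) (snd q) * snd h) (x, t) (h, 0)))
        (at x within {0..1})"
    by (rule has_derivative_in_compose2[where t="{0..1} \<times> {0..}"])
      (use u_deriv x t in \<open>auto simp: mem_Times_iff intro!: derivative_eq_intros\<close>)
  then show ?thesis by (simp add: has_field_derivative_def)
qed

lemma u_has_derivative_t:
  assumes x: "x \<in> {0..1}" and t: "t \<ge> 0"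
  shows "((\<lambda>t. u x t) has_real_derivative ut x t) (at t within {0..})"
proof -
  have "((\<lambda>s. (\<lambda>p. u (fst p) (snd p)) (x, s)) has_derivative
          (\<lambda>h. (\<lambda>q h. ux (fst q) (snd q) * fst h + ut (fst q) (snd q) * snd h) (x, t) (0, h)))
        (at t within {0..})"
    by (rule has_derivative_in_compose2[where t="{0..1} \<times> {0..}"])
      (use u_deriv x t in \<open>auto simp: mem_Times_iff intro!: derivative_eq_intros\<close>)
  then show ?thesis by (simp add: has_field_derivative_def)
qed

lemma integral_ux:
  assumes x: "x \<in> {0..1}" and t: "t \<ge> 0"
  shows "integral {0..x} (\<lambda>y. ux y t) = u x t - u 0 t"
proof (rule integral_unique, rule fundamental_theorem_of_calculus)
  fix y assume y: "y \<in> {0..x}"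
  then have "((\<lambda>x. u x t) has_real_derivative ux y t) (at y within {0..1})"
    using x t by (intro u_has_derivative_x) auto
  then have "((\<lambda>x. u x t) has_real_derivative ux y t) (at y within {0..x})"
    by (rule DERIV_subset) (use x in auto)
  then show "((\<lambda>x. u x t) has_vector_derivative ux y t) (at y within {0..x})"
    by (simp add: has_real_derivative_iff_has_vector_derivative)
qed (use x in simp)

(* wt is both the time derivative of w (w_has_derivative_t) and its space derivative (w_eq_integral_wt). *)
definition w :: "real \<Rightarrow> real \<Rightarrow> real" where
  "w x t = u x t - conv k (\<lambda>y. u y t) x"

definition wt :: "real \<Rightarrow> real \<Rightarrow> real" where
  "wt x t = ut x t - conv k (\<lambda>y. ut y t) x"

lemma w_slice_cont: "t \<ge> 0 \<Longrightarrow> continuous_on {0..1} (\<lambda>x. w x t)"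
  unfolding w_def by (intro continuous_intros u_slice_cont continuous_on_conv k_cont)

lemma wt_slice_cont: "t \<ge> 0 \<Longrightarrow> continuous_on {0..1} (\<lambda>x. wt x t)"
  unfolding wt_def by (intro continuous_intros ut_slice_cont continuous_on_conv k_cont)

lemma w_cont: "continuous_on ({0..1} \<times> {0..}) (\<lambda>p. w (fst p) (snd p))"
  unfolding w_def by (intro continuous_intros u_cont continuous_on_conv_param[OF k_cont u_cont])

lemma wt_cont: "continuous_on ({0..1} \<times> {0..}) (\<lambda>p. wt (fst p) (snd p))"
  unfolding wt_def by (intro continuous_intros ut_cont continuous_on_conv_param[OF k_cont ut_cont])

lemma u_eq_w_sub_conv: "t \<ge> 0 \<Longrightarrow> x \<in> {0..1} \<Longrightarrow> u x t = w x t - conv \<beta> (\<lambda>y. w y t) x"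
  unfolding w_def by (rule is_bs_kernel_inverse[OF beta_cont kernel u_slice_cont])

lemma w_eq_integral_wt:
  assumes t: "t \<ge> 0" and x: "x \<in> {0..1}"
  shows "w x t = u 0 t + integral {0..x} (\<lambda>\<xi>. wt \<xi> t)"
proof -
  define U where "U = (\<lambda>y. u y t)"
  define Ut where "Ut = (\<lambda>y. ut y t)"
  define B where "B = (\<lambda>y. integral {0..y} \<beta> - 1)"
  have U: "continuous_on {0..1} U" unfolding U_def using u_slice_cont[OF t] .
  have Ut: "continuous_on {0..1} Ut" unfolding Ut_def using ut_slice_cont[OF t] .
  have B: "continuous_on {0..1} B" unfolding B_def
    by (intro continuous_intros indefinite_integral_continuous_1 integrable_continuous_interval beta_cont)
  have integral_Ut: "integral {0..\<xi>} Ut = U \<xi> + u 0 t * B \<xi>" if \<xi>: "\<xi> \<in> {0..1}" for \<xi>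
  proof -
    have "integral {0..\<xi>} Ut = integral {0..\<xi>} (\<lambda>y. ux y t + u 0 t * \<beta> y)"
      unfolding Ut_def by (rule integral_cong) (use \<xi> t in \<open>auto simp: pde mult.commute\<close>)
    also have "\<dots> = integral {0..\<xi>} (\<lambda>y. ux y t) + u 0 t * integral {0..\<xi>} \<beta>"
      using \<xi> by (subst integral_add) (auto intro!: integrable_continuous_interval continuous_intros
          continuous_on_subset[OF ux_slice_cont[OF t]] continuous_on_subset[OF beta_cont])
    finally show ?thesis using integral_ux[OF \<xi> t] by (simp add: U_def B_def algebra_simps)
  qed
  have "integral {0..x} (\<lambda>\<xi>. wt \<xi> t) = integral {0..x} Ut - integral {0..x} (conv k Ut)"
    unfolding wt_def Ut_def using x
    by (subst integral_diff) (auto intro!: integrable_continuous_interval continuous_on_conv k_cont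
        continuous_on_subset[OF ut_slice_cont[OF t]] continuous_on_subset[OF continuous_on_conv])
  also have "integral {0..x} (conv k Ut) = conv k (\<lambda>\<xi>. U \<xi> + u 0 t * B \<xi>) x"
    unfolding integral_conv[OF k_cont Ut x] by (rule conv_cong) (use x integral_Ut in auto)
  also have "\<dots> = conv k U x + u 0 t * conv k B x"
    using conv_add_right[OF k_cont U _ x, of "\<lambda>\<xi>. u 0 t * B \<xi>"] B
    by (simp add: continuous_on_mult conv_cmult_right)
  \<comment> \<open>The kernel equation cancels the in-domain feedback term \<open>\<beta> x * u 0 t\<close>.\<close>
  also have "conv k B x = integral {0..x} \<beta>"
    unfolding B_def by (rule is_bs_kernel_conv_integral[OF beta_cont kernel x])
  finally show ?thesis using integral_Ut[OF x] by (simp add: w_def U_def B_def algebra_simps)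
qed

lemma w_has_derivative_t:
  assumes x: "x \<in> {0..1}" and t: "t \<ge> 0"
  shows "((\<lambda>t. w x t) has_real_derivative wt x t) (at t within {0..})"
proof -
  have "((\<lambda>t. integral (cbox 0 x) (\<lambda>y. k (x - y) * u y t)) has_field_derivative
          integral (cbox 0 x) (\<lambda>y. k (x - y) * ut y t)) (at t within {0..})"
  proof (rule leibniz_rule_field_derivative)
    fix s y assume s: "s \<in> {0::real..}" and "y \<in> cbox 0 x"
    then have "y \<in> {0..1}" using x by auto
    then show "((\<lambda>s. k (x - y) * u y s) has_field_derivative k (x - y) * ut y s) (at s within {0..})"
      using s by (intro DERIV_cmult u_has_derivative_t) auto
  next
    fix s :: real assume "s \<in> {0..}"
    then show "(\<lambda>y. k (x - y) * u y s) integrable_on cbox 0 x"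
      using conv_integrable[OF k_cont u_slice_cont x] by simp
  next
    have c1: "continuous_on ({0..} \<times> cbox 0 x) (\<lambda>q. k (x - snd q))"
      by (rule continuous_on_compose2[OF k_cont]) (use x in \<open>auto intro!: continuous_intros\<close>)
    have c2: "continuous_on ({0..} \<times> cbox 0 x) (\<lambda>q. (\<lambda>p. ut (fst p) (snd p)) (snd q, fst q))"
      by (rule continuous_on_compose2[OF ut_cont]) (use x in \<open>auto intro!: continuous_intros\<close>)
    show "continuous_on ({0..} \<times> cbox 0 x) (\<lambda>(s, y). k (x - y) * ut y s)"
      using continuous_on_mult[OF c1 c2] by (simp add: case_prod_beta)
  qed (use t in \<open>auto simp: convex_real_interval\<close>)
  then have "((\<lambda>t. conv k (\<lambda>y. u y t) x) has_real_derivative conv k (\<lambda>y. ut y t) x) (at t within {0..})"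
    by (simp add: conv_def)
  then show ?thesis unfolding w_def wt_def by (intro DERIV_diff u_has_derivative_t x t)
qed

definition lyap :: "real \<Rightarrow> real" where
  "lyap t = integral {0..1} (\<lambda>x. exp (c * x) * (w x t)\<^sup>2)"

lemma lyap_nonneg: "t \<ge> 0 \<Longrightarrow> 0 \<le> lyap t"
  unfolding lyap_def
  by (rule integral_nonneg) (auto intro!: integrable_continuous_interval continuous_intros w_slice_cont)

lemma lyap_has_derivative_integral:
  assumes t: "t \<ge> 0"
  shows "(lyap has_real_derivative integral {0..1} (\<lambda>x. exp (c * x) * (2 * w x t * wt x t)))
           (at t within {0..})"
proof -
  have "((\<lambda>t. integral (cbox 0 1) (\<lambda>x. exp (c * x) * (w x t)\<^sup>2)) has_field_derivative
          integral (cbox 0 1) (\<lambda>x. exp (c * x) * (2 * w x t * wt x t))) (at t within {0..})"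
  proof (rule leibniz_rule_field_derivative)
    fix s x assume s: "s \<in> {0::real..}" and "x \<in> cbox (0::real) 1"
    then have "((\<lambda>s. w x s) has_real_derivative wt x s) (at s within {0..})"
      by (intro w_has_derivative_t) auto
    then show "((\<lambda>s. exp (c * x) * (w x s)\<^sup>2) has_field_derivative exp (c * x) * (2 * w x s * wt x s))
        (at s within {0..})"
      by (auto intro!: derivative_eq_intros simp: algebra_simps)
  next
    fix s :: real assume "s \<in> {0..}"
    then show "(\<lambda>x. exp (c * x) * (w x s)\<^sup>2) integrable_on cbox 0 1"
      by (auto intro!: integrable_continuous_interval continuous_intros w_slice_cont)
  next
    have "continuous_on ({0..} \<times> cbox 0 1) (\<lambda>q. (\<lambda>p. w (fst p) (snd p)) (snd q, fst q))"
      by (rule continuous_on_compose2[OF w_cont]) (auto intro!: continuous_intros)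
    moreover have "continuous_on ({0..} \<times> cbox 0 1) (\<lambda>q. (\<lambda>p. wt (fst p) (snd p)) (snd q, fst q))"
      by (rule continuous_on_compose2[OF wt_cont]) (auto intro!: continuous_intros)
    ultimately show "continuous_on ({0..} \<times> cbox 0 1) (\<lambda>(s, x). exp (c * x) * (2 * w x s * wt x s))"
      by (auto simp: case_prod_beta intro!: continuous_intros)
  qed (use t in \<open>auto simp: convex_real_interval\<close>)
  then show ?thesis by (simp add: lyap_def[abs_def])
qed

lemma integral_weighted_w_wt:
  assumes t: "t \<ge> 0"
  shows "integral {0..1} (\<lambda>x. exp (c * x) * (2 * w x t * wt x t))
           = exp c * (w 1 t)\<^sup>2 - (w 0 t)\<^sup>2 - c * lyap t"
proof -
  \<comment> \<open>\<open>w\<close> is differentiable in \<open>x\<close> through its integral representation, with \<open>w\<^sub>x = w\<^sub>t\<close>.\<close>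
  define W where "W = (\<lambda>x. u 0 t + integral {0..x} (\<lambda>\<xi>. wt \<xi> t))"
  have W_eq: "W x = w x t" if "x \<in> {0..1}" for x using w_eq_integral_wt[OF t that] by (simp add: W_def)
  define F' where "F' = (\<lambda>x. c * (exp (c * x) * (W x)\<^sup>2) + exp (c * x) * (2 * W x * wt x t))"
  have "(F' has_integral (exp (c * 1) * (W 1)\<^sup>2 - exp (c * 0) * (W 0)\<^sup>2)) {0..1}"
  proof (rule fundamental_theorem_of_calculus)
    fix x :: real assume x: "x \<in> {0..1}"
    have "(W has_real_derivative wt x t) (at x within {0..1})"
      unfolding W_def using integral_has_real_derivative[OF wt_slice_cont[OF t] x]
      by (auto intro!: derivative_eq_intros)
    then have "((\<lambda>x. exp (c * x) * (W x)\<^sup>2) has_real_derivative F' x) (at x within {0..1})"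
      unfolding F'_def by (auto intro!: derivative_eq_intros simp: algebra_simps)
    then show "((\<lambda>x. exp (c * x) * (W x)\<^sup>2) has_vector_derivative F' x) (at x within {0..1})"
      by (simp add: has_real_derivative_iff_has_vector_derivative)
  qed simp
  then have "integral {0..1} F' = exp c * (w 1 t)\<^sup>2 - (w 0 t)\<^sup>2"
    using W_eq[of 0] W_eq[of 1] by (simp add: integral_unique)
  moreover have "integral {0..1} F'
      = c * lyap t + integral {0..1} (\<lambda>x. exp (c * x) * (2 * w x t * wt x t))"
  proof -
    have "integral {0..1} F' = integral {0..1}
        (\<lambda>x. c * (exp (c * x) * (w x t)\<^sup>2) + exp (c * x) * (2 * w x t * wt x t))"
      unfolding F'_def by (rule integral_cong) (simp add: W_eq)
    also have "\<dots> = c * lyap t + integral {0..1} (\<lambda>x. exp (c * x) * (2 * w x t * wt x t))"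
      unfolding lyap_def
      by (subst integral_add) (auto intro!: integrable_continuous_interval continuous_intros
          w_slice_cont wt_slice_cont t)
    finally show ?thesis .
  qed
  ultimately show ?thesis by simp
qed

lemma w_boundary_eq:
  assumes t: "t \<ge> 0"
  shows "w 1 t = integral {0..1} (\<lambda>y. (khat (1 - y) - k (1 - y)) * u y t)"
proof -
  have "w 1 t = integral {0..1} (\<lambda>y. khat (1 - y) * u y t) - integral {0..1} (\<lambda>y. k (1 - y) * u y t)"
    unfolding w_def conv_def using boundary[of t] t by simp
  also have "\<dots> = integral {0..1} (\<lambda>y. (khat (1 - y) - k (1 - y)) * u y t)"
    using conv_integrable[OF khat_cont u_slice_cont[OF t], of 1]
      conv_integrable[OF k_cont u_slice_cont[OF t], of 1]
    by (simp add: integral_diff left_diff_distrib)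
  finally show ?thesis .
qed

lemma integral_abs_u_le:
  assumes t: "t \<ge> 0"
  shows "integral {0..1} (\<lambda>x. \<bar>u x t\<bar>) \<le> (1 + bmax) * integral {0..1} (\<lambda>x. \<bar>w x t\<bar>)"
proof -
  define I where "I = integral {0..1} (\<lambda>x. \<bar>w x t\<bar>)"
  have "integral {0..1} (\<lambda>x. \<bar>u x t\<bar>) \<le> integral {0..1} (\<lambda>x. \<bar>w x t\<bar> + bmax * I)"
  proof (rule integral_le)
    fix x :: real assume x: "x \<in> {0..1}"
    have "\<bar>conv \<beta> (\<lambda>y. w y t) x\<bar> \<le> bmax * integral {0..x} (\<lambda>y. \<bar>w y t\<bar>)"
      by (rule abs_conv_le[OF beta_cont w_slice_cont[OF t] x beta_le])
    also have "\<dots> \<le> bmax * I"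
      unfolding I_def using integral_abs_le_unit[OF w_slice_cont[OF t] x] bmax_nonneg
      by (rule mult_left_mono)
    finally show "\<bar>u x t\<bar> \<le> \<bar>w x t\<bar> + bmax * I" using u_eq_w_sub_conv[OF t x] by linarith
  qed (auto intro!: integrable_continuous_interval continuous_intros u_slice_cont w_slice_cont t)
  also have "\<dots> = (1 + bmax) * I" unfolding I_def
    by (subst integral_add) (auto intro!: integrable_continuous_interval continuous_intros w_slice_cont t
        simp: algebra_simps)
  finally show ?thesis by (simp add: I_def)
qed

lemma integral_abs_w_square_le:
  assumes t: "t \<ge> 0"
  shows "(integral {0..1} (\<lambda>x. \<bar>w x t\<bar>))\<^sup>2 \<le> lyap t / c"
proof -
  have "(integral {0..1} (\<lambda>x. \<bar>exp (- c * x / 2) * (exp (c * x / 2) * w x t)\<bar>))\<^sup>2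
      \<le> integral {0..1} (\<lambda>x. (exp (- c * x / 2))\<^sup>2) * integral {0..1} (\<lambda>x. (exp (c * x / 2) * w x t)\<^sup>2)"
    by (rule integral_abs_mult_square_le) (auto intro!: continuous_intros w_slice_cont t)
  moreover have "(\<lambda>x. \<bar>exp (- c * x / 2) * (exp (c * x / 2) * w x t)\<bar>) = (\<lambda>x. \<bar>w x t\<bar>)"
    by (simp add: mult.assoc[symmetric] exp_add[symmetric])
  moreover have "(\<lambda>x. (exp (- c * x / 2))\<^sup>2) = (\<lambda>x. exp (- c * x))"
    by (simp add: power2_eq_square exp_add[symmetric] mult.commute)
  moreover have "(\<lambda>x. (exp (c * x / 2) * w x t)\<^sup>2) = (\<lambda>x. exp (c * x) * (w x t)\<^sup>2)"
  proof -
    have "(exp (c * x / 2))\<^sup>2 = exp (c * x)" for x by (simp add: power2_eq_square flip: exp_add)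
    then show ?thesis by (simp add: power_mult_distrib)
  qed
  ultimately have "(integral {0..1} (\<lambda>x. \<bar>w x t\<bar>))\<^sup>2 \<le> integral {0..1} (\<lambda>x. exp (- c * x)) * lyap t"
    by (simp only: lyap_def)
  also have "\<dots> \<le> 1 / c * lyap t"
  proof (rule mult_right_mono[OF _ lyap_nonneg[OF t]])
    have "((\<lambda>x. exp (- c * x)) has_integral
        (\<lambda>x. - exp (- c * x) / c) 1 - (\<lambda>x. - exp (- c * x) / c) 0) {0..1}"
    proof (rule fundamental_theorem_of_calculus)
      fix x :: real assume "x \<in> {0..1}"
      have "((\<lambda>x. - exp (- c * x) / c) has_real_derivative exp (- c * x)) (at x within {0..1})"
        using c_pos by (auto intro!: derivative_eq_intros simp: field_simps)
      then show "((\<lambda>x. - exp (- c * x) / c) has_vector_derivative exp (- c * x)) (at x within {0..1})"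
        by (simp add: has_real_derivative_iff_has_vector_derivative)
    qed simp
    then show "integral {0..1} (\<lambda>x. exp (- c * x)) \<le> 1 / c"
      using c_pos by (simp add: integral_unique divide_right_mono field_simps)
  qed
  finally show ?thesis by simp
qed

lemma w_boundary_square_le:
  assumes t: "t \<ge> 0"
  shows "(w 1 t)\<^sup>2 \<le> \<epsilon>\<^sup>2 * (1 + bmax)\<^sup>2 / c * lyap t"
proof -
  have "norm (integral {0..1} (\<lambda>y. (khat (1 - y) - k (1 - y)) * u y t))
      \<le> integral {0..1} (\<lambda>y. \<epsilon> * \<bar>u y t\<bar>)"
  proof (rule integral_norm_bound_integral)
    show "(\<lambda>y. (khat (1 - y) - k (1 - y)) * u y t) integrable_on {0..1}"
      using conv_integrable[OF khat_cont u_slice_cont[OF t], of 1]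
        conv_integrable[OF k_cont u_slice_cont[OF t], of 1]
      by (auto simp: left_diff_distrib intro!: integrable_diff)
    show "(\<lambda>y. \<epsilon> * \<bar>u y t\<bar>) integrable_on {0..1}"
      by (auto intro!: integrable_continuous_interval continuous_intros u_slice_cont t)
    fix y :: real assume "y \<in> {0..1}"
    then have "\<bar>khat (1 - y) - k (1 - y)\<bar> \<le> \<epsilon>" using kernel_error[of "1 - y"] by auto
    then show "norm ((khat (1 - y) - k (1 - y)) * u y t) \<le> \<epsilon> * \<bar>u y t\<bar>"
      by (simp add: abs_mult mult_right_mono)
  qed
  then have "\<bar>w 1 t\<bar> \<le> integral {0..1} (\<lambda>y. \<epsilon> * \<bar>u y t\<bar>)"
    by (simp add: w_boundary_eq[OF t])
  also have "\<dots> \<le> \<epsilon> * (1 + bmax) * integral {0..1} (\<lambda>x. \<bar>w x t\<bar>)"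
    using integral_abs_u_le[OF t] eps_nonneg by (simp add: mult.assoc mult_left_mono)
  finally have "(w 1 t)\<^sup>2 \<le> (\<epsilon> * (1 + bmax))\<^sup>2 * (integral {0..1} (\<lambda>x. \<bar>w x t\<bar>))\<^sup>2"
    by (metis abs_ge_zero order_trans power2_abs power_mono power_mult_distrib)
  also have "\<dots> \<le> (\<epsilon> * (1 + bmax))\<^sup>2 * (lyap t / c)"
    using integral_abs_w_square_le[OF t] by (rule mult_left_mono) simp
  finally show ?thesis by (simp add: power_mult_distrib)
qed

definition decay_rate :: real where
  "decay_rate = c - exp c / c * \<epsilon>\<^sup>2 * (1 + bmax)\<^sup>2"

lemma decay_rate_ge: "bmax \<le> B \<Longrightarrow> c - exp c / c * \<epsilon>\<^sup>2 * (1 + B)\<^sup>2 \<le> decay_rate"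
  unfolding decay_rate_def using c_pos bmax_nonneg
  by (intro diff_left_mono mult_left_mono power_mono) auto

lemma lyap_decay:
  assumes T: "T \<ge> 0"
  shows "lyap T \<le> exp (- decay_rate * T) * lyap 0"
proof -
  define r where "r = decay_rate"
  define V' where "V' = (\<lambda>t. integral {0..1} (\<lambda>x. exp (c * x) * (2 * w x t * wt x t)))"
  have V'_le: "V' t \<le> - r * lyap t" if t: "t \<ge> 0" for t
  proof -
    have "V' t \<le> exp c * (w 1 t)\<^sup>2 - c * lyap t"
      using integral_weighted_w_wt[OF t] by (simp add: V'_def)
    also have "\<dots> \<le> exp c * (\<epsilon>\<^sup>2 * (1 + bmax)\<^sup>2 / c * lyap t) - c * lyap t"
      using w_boundary_square_le[OF t] by (intro diff_right_mono mult_left_mono) auto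
    also have "\<dots> = - r * lyap t" by (simp add: r_def decay_rate_def algebra_simps)
    finally show ?thesis .
  qed
  have "exp (r * T) * lyap T \<le> exp (r * 0) * lyap 0"
  proof (rule has_real_derivative_nonpos_imp_le[of 0 T _ "\<lambda>t. exp (r * t) * (r * lyap t + V' t)"])
    fix t assume t: "t \<in> {0..T}"
    have "(lyap has_real_derivative V' t) (at t within {0..T})"
      unfolding V'_def by (rule DERIV_subset[OF lyap_has_derivative_integral]) (use t in auto)
    then show "((\<lambda>t. exp (r * t) * lyap t) has_real_derivative exp (r * t) * (r * lyap t + V' t))
        (at t within {0..T})"
      by (auto intro!: derivative_eq_intros simp: algebra_simps)
    show "exp (r * t) * (r * lyap t + V' t) \<le> 0"
      using V'_le[of t] t by (intro mult_nonneg_nonpos) auto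
  qed (use T in auto)
  then show ?thesis by (simp add: r_def exp_minus field_simps)
qed

lemma L2_norm01_w_le_sqrt_lyap:
  assumes t: "t \<ge> 0"
  shows "L2_norm01 (\<lambda>x. w x t) \<le> sqrt (lyap t)"
  unfolding L2_norm01_def lyap_def
proof (rule real_sqrt_le_mono, rule integral_le)
  fix x :: real assume "x \<in> {0..1}"
  then have "1 \<le> exp (c * x)" using c_pos by simp
  then show "(w x t)\<^sup>2 \<le> exp (c * x) * (w x t)\<^sup>2"
    using mult_right_mono[of 1 "exp (c * x)" "(w x t)\<^sup>2"] by simp
qed (auto intro!: integrable_continuous_interval continuous_intros w_slice_cont t)

lemma sqrt_lyap_le_L2_norm01_w: "sqrt (lyap 0) \<le> exp (c / 2) * L2_norm01 (\<lambda>x. w x 0)"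
proof -
  have "lyap 0 \<le> integral {0..1} (\<lambda>x. exp c * (w x 0)\<^sup>2)"
    unfolding lyap_def
  proof (rule integral_le)
    fix x :: real assume "x \<in> {0..1}"
    then have "exp (c * x) \<le> exp c" using c_pos by (simp add: mult_left_le)
    then show "exp (c * x) * (w x 0)\<^sup>2 \<le> exp c * (w x 0)\<^sup>2" by (rule mult_right_mono) simp
  qed (auto intro!: integrable_continuous_interval continuous_intros w_slice_cont)
  then have "sqrt (lyap 0) \<le> sqrt (exp c) * L2_norm01 (\<lambda>x. w x 0)"
    by (simp add: L2_norm01_def flip: real_sqrt_mult)
  then show ?thesis by (simp add: sqrt_exp)
qed

lemma L2_norm01_u_le:
  assumes t: "t \<ge> 0"
  shows "L2_norm01 (\<lambda>x. u x t) \<le> (1 + bmax) * (1 + bmax * exp bmax) * exp (c / 2)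
           * exp (- decay_rate * t / 2) * L2_norm01 (\<lambda>x. u x 0)"
proof -
  have K: "0 \<le> bmax * exp bmax" using bmax_nonneg by simp
  define E where "E = exp (- decay_rate * t / 2)"
  have "L2_norm01 (\<lambda>x. u x t) = L2_norm01 (\<lambda>x. w x t - conv \<beta> (\<lambda>y. w y t) x)"
    by (rule L2_norm01_cong) (rule u_eq_w_sub_conv[OF t])
  also have "\<dots> \<le> (1 + bmax) * L2_norm01 (\<lambda>x. w x t)"
    by (rule L2_norm01_sub_conv_le[OF beta_cont w_slice_cont[OF t] bmax_nonneg beta_le])
  also have "\<dots> \<le> (1 + bmax) * (E * sqrt (lyap 0))"
  proof -
    have "sqrt (lyap t) \<le> sqrt (exp (- decay_rate * t) * lyap 0)"
      using lyap_decay[OF t] by (rule real_sqrt_le_mono)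
    also have "\<dots> = E * sqrt (lyap 0)" by (simp add: E_def real_sqrt_mult sqrt_exp)
    finally have "sqrt (lyap t) \<le> E * sqrt (lyap 0)" .
    with L2_norm01_w_le_sqrt_lyap[OF t] show ?thesis
      using bmax_nonneg by (simp add: mult_left_mono)
  qed
  also have "\<dots> \<le> (1 + bmax) * (E * (exp (c / 2) * ((1 + bmax * exp bmax) * L2_norm01 (\<lambda>x. u x 0))))"
  proof -
    have "L2_norm01 (\<lambda>x. w x 0) \<le> (1 + bmax * exp bmax) * L2_norm01 (\<lambda>x. u x 0)"
      unfolding w_def using is_bs_kernel_abs_le[OF beta_cont beta_le kernel]
      by (intro L2_norm01_sub_conv_le[OF k_cont u_slice_cont K]) auto
    then have "sqrt (lyap 0) \<le> exp (c / 2) * ((1 + bmax * exp bmax) * L2_norm01 (\<lambda>x. u x 0))"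
      by (rule order_trans[OF sqrt_lyap_le_L2_norm01_w mult_left_mono]) simp
    then show ?thesis
      using bmax_nonneg by (simp add: E_def mult_left_mono)
  qed
  also have "\<dots> = (1 + bmax) * (1 + bmax * exp bmax) * exp (c / 2) * E * L2_norm01 (\<lambda>x. u x 0)"
    by (simp only: mult_ac)
  finally show ?thesis unfolding E_def .
qed

end

lemma abs_le_sup_norm01:
  assumes "continuous_on {0..1} f" "x \<in> {0..1}"
  shows "\<bar>f x\<bar> \<le> sup_norm01 f"
  unfolding sup_norm01_def
  by (rule cSUP_upper[OF assms(2)], intro bounded_imp_bdd_above compact_imp_bounded
      compact_continuous_image continuous_intros assms(1) compact_Icc)

lemma decay_rate_pos:
  fixes B c \<epsilon> :: real
  assumes "0 \<le> B" "c > 0" "0 \<le> \<epsilon>" "\<epsilon> < c * exp (- c / 2) / (1 + B)"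
  shows "c - exp c / c * \<epsilon>\<^sup>2 * (1 + B)\<^sup>2 > 0"
proof -
  have "\<epsilon> * (1 + B) < c * exp (- c / 2)" using assms by (simp add: field_simps)
  then have "(\<epsilon> * (1 + B))\<^sup>2 < (c * exp (- c / 2))\<^sup>2"
    using assms by (intro power_strict_mono) auto
  also have "\<dots> = c\<^sup>2 * exp (- c)" by (simp add: power_mult_distrib power2_eq_square flip: exp_add)
  finally have "exp c / c * (\<epsilon> * (1 + B))\<^sup>2 < exp c / c * (c\<^sup>2 * exp (- c))"
    using assms by (intro mult_strict_left_mono) auto
  also have "\<dots> = c" using assms by (simp add: power2_eq_square exp_minus field_simps)
  finally show ?thesis by (simp add: power_mult_distrib mult.assoc)
qed

lemma decay_bound_mono:
  fixes b \<epsilon> r r' N :: real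
  assumes b: "0 \<le> b" and \<epsilon>: "0 \<le> \<epsilon>" and "r' \<le> r" "t \<ge> 0" "0 \<le> N"
  shows "(1 + b) * (1 + b * exp b) * exp (c / 2) * exp (- r * t / 2) * N
    \<le> (1 + (b + (1 + b) * \<epsilon>) * exp ((1 + b) * \<epsilon>)) * (1 + b * exp b) * exp (c / 2) * exp (- r' * t / 2) * N"
proof -
  have "b + (1 + b) * \<epsilon> \<le> (b + (1 + b) * \<epsilon>) * exp ((1 + b) * \<epsilon>)"
    using b \<epsilon> by (intro mult_le_cancel_left1[THEN iffD2]) auto
  then have "1 + b \<le> 1 + (b + (1 + b) * \<epsilon>) * exp ((1 + b) * \<epsilon>)"
    using b \<epsilon> mult_nonneg_nonneg[of "1 + b" \<epsilon>] by linarith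
  then have gain: "(1 + b) * (1 + b * exp b) * exp (c / 2)
      \<le> (1 + (b + (1 + b) * \<epsilon>) * exp ((1 + b) * \<epsilon>)) * (1 + b * exp b) * exp (c / 2)"
    using b by (intro mult_right_mono) auto
  have "0 \<le> (1 + b) * (1 + b * exp b) * exp (c / 2)" using b by simp
  moreover have "exp (- r * t / 2) \<le> exp (- r' * t / 2)" using assms(3,4) by (simp add: mult_right_mono)
  ultimately have "(1 + b) * (1 + b * exp b) * exp (c / 2) * exp (- r * t / 2)
    \<le> (1 + (b + (1 + b) * \<epsilon>) * exp ((1 + b) * \<epsilon>)) * (1 + b * exp b) * exp (c / 2) * exp (- r' * t / 2)"
    by (intro mult_mono[OF gain] order_trans[OF _ gain]) auto
  then show ?thesis by (rule mult_right_mono) (rule assms(5))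
qed

lemma closed_loop_solution_imp_bs_closed_loop:
  assumes "closed_loop_solution \<beta> khat u" "continuous_on {0..1} \<beta>"
    "\<And>x. x \<in> {0..1} \<Longrightarrow> \<bar>\<beta> x\<bar> \<le> bmax" "is_bs_kernel \<beta> k" "continuous_on {0..1} khat"
    "\<And>x. x \<in> {0..1} \<Longrightarrow> \<bar>k x - khat x\<bar> \<le> \<epsilon>" "c > 0"
  shows "\<exists>ux ut. bs_closed_loop \<beta> k khat u ux ut bmax \<epsilon> c"
  using assms unfolding closed_loop_solution_def bs_closed_loop_def by blast

theorem theorem2:
  fixes B c \<epsilon> :: real and \<beta> k khat :: "real \<Rightarrow> real" and u :: "real \<Rightarrow> real \<Rightarrow> real"
  assumes "B > 0" and "c > 0"
    and "\<exists>L. L-lipschitz_on {0..1} \<beta>"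
    and "sup_norm01 \<beta> \<le> B"
    and "is_bs_kernel \<beta> k"
    and "continuous_on {0..1} khat"
    and "\<forall>x\<in>{0..1}. \<bar>k x - khat x\<bar> < \<epsilon>"
    and "0 < \<epsilon>" and "\<epsilon> < c * exp (- c / 2) / (1 + B)"
    and "closed_loop_solution \<beta> khat u"
  shows "let bb = sup_norm01 \<beta>;
             cs = c - exp c / c * \<epsilon>\<^sup>2 * (1 + B)\<^sup>2;
             M = (1 + (bb + (1 + bb) * \<epsilon>) * exp ((1 + bb) * \<epsilon>)) * (1 + bb * exp bb) * exp (c / 2)
         in cs > 0 \<and>
            (\<forall>t\<ge>0. L2_norm01 (\<lambda>x. u x t) \<le> M * exp (- cs * t / 2) * L2_norm01 (\<lambda>x. u x 0))"
proof -
  have \<beta>: "continuous_on {0..1} \<beta>" using assms(3) lipschitz_on_continuous_on by blast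
  define bb where "bb = sup_norm01 \<beta>"
  define cs where "cs = c - exp c / c * \<epsilon>\<^sup>2 * (1 + B)\<^sup>2"
  have "\<exists>ux ut. bs_closed_loop \<beta> k khat u ux ut bb \<epsilon> c"
    by (rule closed_loop_solution_imp_bs_closed_loop)
      (use assms \<beta> abs_le_sup_norm01[OF \<beta>] in \<open>auto simp: bb_def less_imp_le\<close>)
  then obtain ux ut where "bs_closed_loop \<beta> k khat u ux ut bb \<epsilon> c" by blast
  then interpret bs_closed_loop \<beta> k khat u ux ut bb \<epsilon> c .
  have rate: "cs \<le> decay_rate" unfolding cs_def using assms(4) by (intro decay_rate_ge) (simp add: bb_def)
  \<comment> \<open>The exact inverse transform gives the factor \<open>1 + bb\<close>, smaller than the first factor of \<open>M\<close>.\<close>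
  have "L2_norm01 (\<lambda>x. u x t) \<le> (1 + (bb + (1 + bb) * \<epsilon>) * exp ((1 + bb) * \<epsilon>)) * (1 + bb * exp bb)
      * exp (c / 2) * exp (- cs * t / 2) * L2_norm01 (\<lambda>x. u x 0)" if "t \<ge> 0" for t
    using L2_norm01_u_le[OF that] decay_bound_mono[OF bmax_nonneg eps_nonneg rate that L2_norm01_nonneg]
    by (rule order_trans)
  moreover have "cs > 0" unfolding cs_def using assms(1,2,8,9) by (intro decay_rate_pos) auto
  ultimately show ?thesis unfolding Let_def cs_def bb_def by blast
qed

end
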